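(* Let $k\ge6$, $0<\theta<\frac{k^2-6k+1}{(k+1)^2}$, and let $$s^\pm=\frac{k-3-(k+1)\theta\pm\sqrt{(1-\theta)[k^2-6k+1-(k+1)^2\theta]}}{4(1+\theta)},\qquad \lambda^\pm=s^\pm\Bigl(\frac{1+2s^\pm}{1+(1+\theta)s^\pm}\Bigr)^k.$$ If $\lambda\in(\lambda^-,\lambda^+)$, then with $\phi(x)=\lambda\bigl(\frac{1+(1+\theta)x}{1+2x}\bigr)^k$ the system $z=\phi(t)$, $t=\phi(z)$ has at least three solutions in $(0,\infty)^2$, namely $(x_*,x_* )$, $(x_0,x_1)$, $(x_1,x_0)$ with $x_0\ne x_1$, where $x_*$ is the unique positive fixed point of $\phi$. Consequently there are at least three 2-periodic splitting Gibbs measures of the SCWR model.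
   Context: SCWR model on the Cayley tree of order $k$, spins $\{-1,0,1\}$, activity $\lambda>0$, $\theta=e^{-J\beta}\in(0,1)$. Splitting Gibbs measures correspond to positive solutions $(z_{1,i},z_{2,i})_{i}$ of $z_{1,i}=\lambda\prod_{j\in S(i)}\frac{1+z_{1,j}+\theta z_{2,j}}{1+z_{1,j}+z_{2,j}}$, $z_{2,i}=\lambda\prod_{j\in S(i)}\frac{1+z_{2,j}+\theta z_{1,j}}{1+z_{1,j}+z_{2,j}}$ ($S(i)$ the $k$ direct successors of $i$). A 2-periodic splitting Gibbs measure is one whose solution takes a value $(z_1,z_2)$ on all vertices at even distance from the root and a value $(t_1,t_2)$ on all vertices at odd distance; the solutions considered here have $z_1=z_2=z$ and $t_1=t_2=t$, in which case the equations reduce to $z=\phi(t)$, $t=\phi(z)$. *)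

theory Defs
  imports Complex_Main
begin

definition scwr_phi :: "nat \<Rightarrow> real \<Rightarrow> real \<Rightarrow> real \<Rightarrow> real" where
  "scwr_phi k \<theta> lam x = lam * ((1 + (1 + \<theta>) * x) / (1 + 2 * x)) ^ k"

definition scwr_s_minus :: "nat \<Rightarrow> real \<Rightarrow> real" where
  "scwr_s_minus k \<theta> =
     (real k - 3 - (real k + 1) * \<theta>
       - sqrt ((1 - \<theta>) * (real k ^ 2 - 6 * real k + 1 - (real k + 1) ^ 2 * \<theta>)))
     / (4 * (1 + \<theta>))"

definition scwr_s_plus :: "nat \<Rightarrow> real \<Rightarrow> real" where
  "scwr_s_plus k \<theta> =
     (real k - 3 - (real k + 1) * \<theta>
       + sqrt ((1 - \<theta>) * (real k ^ 2 - 6 * real k + 1 - (real k + 1) ^ 2 * \<theta>)))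
     / (4 * (1 + \<theta>))"

definition scwr_lambda_of :: "nat \<Rightarrow> real \<Rightarrow> real \<Rightarrow> real" where
  "scwr_lambda_of k \<theta> s = s * ((1 + 2 * s) / (1 + (1 + \<theta>) * s)) ^ k"

text \<open>A 2-periodic solution of the tree equations: value (z1,z2) at even-distance
  vertices, (t1,t2) at odd-distance vertices, all positive. Since every vertex has
  exactly k direct successors, all lying at the other parity, the tree equations
  reduce to the following four equations.\<close>
definition scwr_two_periodic_solution ::
  "nat \<Rightarrow> real \<Rightarrow> real \<Rightarrow> real \<times> real \<Rightarrow> real \<times> real \<Rightarrow> bool" where
  "scwr_two_periodic_solution k \<theta> lam zz tt \<longleftrightarrow>
     (let (z1, z2) = zz; (t1, t2) = tt in
        z1 > 0 \<and> z2 > 0 \<and> t1 > 0 \<and> t2 > 0 \<and>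
        z1 = lam * ((1 + t1 + \<theta> * t2) / (1 + t1 + t2)) ^ k \<and>
        z2 = lam * ((1 + t2 + \<theta> * t1) / (1 + t1 + t2)) ^ k \<and>
        t1 = lam * ((1 + z1 + \<theta> * z2) / (1 + z1 + z2)) ^ k \<and>
        t2 = lam * ((1 + z2 + \<theta> * z1) / (1 + z1 + z2)) ^ k)"

end

theory Submission
  imports Defs
begin

text \<open>The map \<open>\<phi>\<close> is positive and decreasing on \<open>[0,\<infinity>)\<close>, so it has exactly one positive
  fixed point \<open>x\<^sub>*\<close>, and \<open>\<lambda> = s ((1 + 2s)/(1 + (1+\<theta>)s))\<^sup>k\<close> at \<open>s = x\<^sub>*\<close>; this
  expression is strictly increasing in \<open>s\<close>, so \<open>\<lambda>\<^sup>- < \<lambda> < \<lambda>\<^sup>+\<close> means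
  \<open>s\<^sup>- < x\<^sub>* < s\<^sup>+\<close>. The numbers \<open>s\<^sup>\<plusminus>\<close> are the roots of
  \<open>2(1+\<theta>)s\<^sup>2 - (k-3-(k+1)\<theta>)s + 1\<close>, and negativity of this quadratic at \<open>x\<^sub>*\<close> is
  equivalent to \<open>\<phi>'(x\<^sub>*) < -1\<close>. Then \<open>\<phi>(\<phi> x) - x\<close> vanishes at \<open>x\<^sub>*\<close> with positive
  slope and is positive at \<open>0\<close>, so it has a zero \<open>x\<^sub>0\<close> in \<open>(0, x\<^sub>*)\<close>, which is not
  a fixed point; \<open>(x\<^sub>0, \<phi> x\<^sub>0)\<close> is the required 2-cycle.\<close>

lemma quadratic_less_zero_between_roots:
  fixes a b c x :: real
  assumes "0 < a"
    and "(b - sqrt (b\<^sup>2 - 4 * a * c)) / (2 * a) < x"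
    and "x < (b + sqrt (b\<^sup>2 - 4 * a * c)) / (2 * a)"
  shows "a * x\<^sup>2 - b * x + c < 0"
proof -
  have "sqrt ((2 * a * x - b)\<^sup>2) < sqrt (b\<^sup>2 - 4 * a * c)"
    using assms by (simp add: real_sqrt_abs abs_less_iff field_simps)
  then have "(2 * a * x - b)\<^sup>2 - (b\<^sup>2 - 4 * a * c) < 0"
    by (simp only: real_sqrt_less_iff)
  moreover have "(2 * a * x - b)\<^sup>2 - (b\<^sup>2 - 4 * a * c) = 4 * a * (a * x\<^sup>2 - b * x + c)"
    by (simp add: power2_eq_square algebra_simps)
  ultimately show ?thesis
    using \<open>0 < a\<close> by (simp add: mult_less_0_iff)
qed

lemma quadratic_smaller_root_pos:
  fixes a b c :: real
  assumes "0 < a" "0 < b" "0 < c"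
  shows "0 < (b - sqrt (b\<^sup>2 - 4 * a * c)) / (2 * a)"
proof -
  have "sqrt (b\<^sup>2 - 4 * a * c) < sqrt (b\<^sup>2)"
    using assms by (simp only: real_sqrt_less_iff) simp
  then show ?thesis
    using assms by (simp add: real_sqrt_abs)
qed

lemma two_cycle_below_repelling_fixed_point:
  fixes \<phi> :: "real \<Rightarrow> real"
  assumes cont: "continuous_on {0..} \<phi>" and pos: "\<And>x. 0 \<le> x \<Longrightarrow> 0 < \<phi> x"
    and fixed: "0 < xs" "\<phi> xs = xs"
    and deriv: "(\<phi> has_real_derivative d) (at xs)" and repelling: "d < -1"
  shows "\<exists>x0. 0 < x0 \<and> x0 < xs \<and> \<phi> (\<phi> x0) = x0"
proof -
  define g where "g x = \<phi> (\<phi> x) - x" for x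
  have "((\<lambda>x. \<phi> (\<phi> x)) has_real_derivative d * d) (at xs)"
    using DERIV_chain2[of \<phi> d \<phi> xs d UNIV] deriv fixed(2) by simp
  then have "(g has_real_derivative d * d - 1) (at xs)"
    unfolding g_def[abs_def] by (rule DERIV_diff[OF _ DERIV_ident])
  moreover have "0 < d * d - 1"
    using mult_strict_mono[of 1 "-d" 1 "-d"] repelling by simp
  ultimately obtain e where e: "0 < e" "\<And>h. 0 < h \<Longrightarrow> h < e \<Longrightarrow> g (xs - h) < g xs"
    using DERIV_pos_inc_left by blast
  define y where "y = xs - min (e / 2) (xs / 2)"
  have y: "0 < y" "y < xs"
    unfolding y_def using e(1) fixed(1) by auto
  have "g y < 0"
    using e fixed by (simp add: y_def g_def)
  moreover have "0 < g 0"
    using pos[OF less_imp_le[OF pos[of 0]]] by (simp add: g_def)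
  moreover have "continuous_on {0..y} g"
  proof -
    have "continuous_on {0..y} (\<phi> \<circ> \<phi>)"
      using pos by (intro continuous_on_compose continuous_on_subset[OF cont])
        (auto simp: less_imp_le)
    then show ?thesis
      unfolding g_def by (intro continuous_intros) (simp add: o_def)
  qed
  ultimately obtain x0 where x0: "0 \<le> x0" "x0 \<le> y" "g x0 = 0"
    using IVT2'[of g y 0 0] y by auto
  moreover have "x0 \<noteq> 0"
    using \<open>0 < g 0\<close> x0(3) by auto
  ultimately have "0 < x0" "x0 < xs" "\<phi> (\<phi> x0) = x0"
    using y by (auto simp: g_def)
  then show ?thesis
    by blast
qed

lemma scwr_s_minus_s_plus_eq_roots:
  fixes k :: nat and \<theta> :: real
  defines "A \<equiv> real k - 3 - (real k + 1) * \<theta>"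
  shows "scwr_s_minus k \<theta> = (A - sqrt (A\<^sup>2 - 4 * (2 * (1 + \<theta>)) * 1)) / (2 * (2 * (1 + \<theta>)))"
    and "scwr_s_plus k \<theta> = (A + sqrt (A\<^sup>2 - 4 * (2 * (1 + \<theta>)) * 1)) / (2 * (2 * (1 + \<theta>)))"
proof -
  have "(1 - \<theta>) * (real k ^ 2 - 6 * real k + 1 - (real k + 1) ^ 2 * \<theta>)
      = A\<^sup>2 - 4 * (2 * (1 + \<theta>)) * 1"
    unfolding A_def by (simp add: power2_eq_square algebra_simps)
  then show "scwr_s_minus k \<theta> = (A - sqrt (A\<^sup>2 - 4 * (2 * (1 + \<theta>)) * 1)) / (2 * (2 * (1 + \<theta>)))"
    and "scwr_s_plus k \<theta> = (A + sqrt (A\<^sup>2 - 4 * (2 * (1 + \<theta>)) * 1)) / (2 * (2 * (1 + \<theta>)))"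
    unfolding scwr_s_minus_def scwr_s_plus_def A_def by simp_all
qed

lemma scwr_theta_less_one:
  assumes "\<theta> < (real k ^ 2 - 6 * real k + 1) / (real k + 1) ^ 2"
  shows "\<theta> < 1"
proof -
  have "real k ^ 2 - 6 * real k + 1 \<le> (real k + 1) ^ 2"
    by (simp add: power2_eq_square algebra_simps)
  then have "(real k ^ 2 - 6 * real k + 1) / (real k + 1) ^ 2 \<le> 1"
    by (simp add: divide_le_eq_1)
  with assms show ?thesis by linarith
qed

lemma scwr_s_minus_pos:
  assumes "1 < k" "0 < \<theta>" "\<theta> < (real k ^ 2 - 6 * real k + 1) / (real k + 1) ^ 2"
  shows "0 < scwr_s_minus k \<theta>"
proof -
  have "\<theta> * (real k + 1) ^ 2 < real k ^ 2 - 6 * real k + 1"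
    using assms(3) by (simp add: pos_less_divide_eq)
  also have "\<dots> < (real k + 1) * (real k - 3)"
    using assms(1) by (simp add: power2_eq_square algebra_simps)
  finally have "(real k + 1) * ((real k + 1) * \<theta>) < (real k + 1) * (real k - 3)"
    by (simp add: power2_eq_square algebra_simps)
  then have "0 < real k - 3 - (real k + 1) * \<theta>"
    by (simp add: mult_less_cancel_left_pos)
  then show ?thesis
    unfolding scwr_s_minus_s_plus_eq_roots(1) using assms(2) by (intro quadratic_smaller_root_pos) simp_all
qed

lemma scwr_s_minus_less_s_plus:
  assumes "0 < \<theta>" "\<theta> < (real k ^ 2 - 6 * real k + 1) / (real k + 1) ^ 2"
  shows "scwr_s_minus k \<theta> < scwr_s_plus k \<theta>"
proof -
  have "0 < real k ^ 2 - 6 * real k + 1 - (real k + 1) ^ 2 * \<theta>"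
    using assms(2) by (simp add: pos_less_divide_eq mult.commute)
  moreover have "0 < 1 - \<theta>"
    using scwr_theta_less_one[OF assms(2)] by simp
  ultimately show ?thesis
    unfolding scwr_s_minus_def scwr_s_plus_def using assms(1)
    by (simp add: divide_strict_right_mono)
qed

text \<open>At a fixed point \<open>x\<close> of \<open>scwr_phi\<close> this inequality says exactly that the derivative
  there is below \<open>-1\<close>; it is how the roots \<open>s\<^sup>\<plusminus>\<close> enter.\<close>
lemma scwr_repelling_between_s:
  fixes x \<theta> :: real
  assumes "-1 < \<theta>" "scwr_s_minus k \<theta> < x" "x < scwr_s_plus k \<theta>"
  shows "(1 + 2 * x) * (1 + (1 + \<theta>) * x) < real k * (1 - \<theta>) * x"
proof -
  have "2 * (1 + \<theta>) * x\<^sup>2 - (real k - 3 - (real k + 1) * \<theta>) * x + 1 < 0"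
    using assms by (intro quadratic_less_zero_between_roots)
      (simp_all add: scwr_s_minus_s_plus_eq_roots)
  then show ?thesis
    by (simp add: power2_eq_square algebra_simps)
qed

definition scwr_ratio :: "real \<Rightarrow> real \<Rightarrow> real" where
  "scwr_ratio \<theta> x = (1 + (1 + \<theta>) * x) / (1 + 2 * x)"

lemma scwr_phi_eq: "scwr_phi k \<theta> lam x = lam * scwr_ratio \<theta> x ^ k"
  by (simp add: scwr_phi_def scwr_ratio_def)

lemma scwr_lambda_of_eq: "scwr_lambda_of k \<theta> s = s / scwr_ratio \<theta> s ^ k"
  by (simp add: scwr_lambda_of_def scwr_ratio_def power_divide)

lemma scwr_ratio_pos: "-1 \<le> \<theta> \<Longrightarrow> 0 \<le> x \<Longrightarrow> 0 < scwr_ratio \<theta> x"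
  by (simp add: scwr_ratio_def add_pos_nonneg)

lemma scwr_ratio_le_one: "\<theta> \<le> 1 \<Longrightarrow> 0 \<le> x \<Longrightarrow> scwr_ratio \<theta> x \<le> 1"
  by (simp add: scwr_ratio_def mult_right_mono)

lemma scwr_ratio_antitone:
  assumes "\<theta> \<le> 1" "0 \<le> x" "x \<le> y"
  shows "scwr_ratio \<theta> y \<le> scwr_ratio \<theta> x"
proof -
  have "(1 + (1 + \<theta>) * x) * (1 + 2 * y) - (1 + (1 + \<theta>) * y) * (1 + 2 * x) = (1 - \<theta>) * (y - x)"
    by (simp add: algebra_simps)
  moreover have "0 \<le> (1 - \<theta>) * (y - x)"
    using assms by simp
  ultimately have "(1 + (1 + \<theta>) * y) * (1 + 2 * x) \<le> (1 + (1 + \<theta>) * x) * (1 + 2 * y)"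
    by linarith
  then show ?thesis
    using assms by (simp add: scwr_ratio_def divide_simps)
qed

lemma scwr_ratio_has_real_derivative:
  "1 + 2 * x \<noteq> 0 \<Longrightarrow>
    (scwr_ratio \<theta> has_real_derivative (\<theta> - 1) / (1 + 2 * x)\<^sup>2) (at x)"
  unfolding scwr_ratio_def[abs_def]
  by (rule derivative_eq_intros refl | simp)+ (simp add: field_simps power2_eq_square)

lemma scwr_phi_pos: "0 < lam \<Longrightarrow> -1 \<le> \<theta> \<Longrightarrow> 0 \<le> x \<Longrightarrow> 0 < scwr_phi k \<theta> lam x"
  by (simp add: scwr_phi_eq scwr_ratio_pos)

lemma scwr_phi_antitone:
  assumes "0 \<le> lam" "-1 \<le> \<theta>" "\<theta> \<le> 1" "0 \<le> x" "x \<le> y"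
  shows "scwr_phi k \<theta> lam y \<le> scwr_phi k \<theta> lam x"
proof -
  have "0 < scwr_ratio \<theta> y"
    using assms by (simp add: scwr_ratio_pos)
  then show ?thesis
    unfolding scwr_phi_eq using assms
    by (intro mult_left_mono power_mono scwr_ratio_antitone) simp_all
qed

lemma continuous_on_scwr_phi: "continuous_on {0..} (scwr_phi k \<theta> lam)"
  unfolding scwr_phi_def[abs_def] by (intro continuous_intros) auto

lemma scwr_phi_unique_fixed_point:
  assumes "0 < lam" "-1 \<le> \<theta>" "\<theta> \<le> 1"
  shows "\<exists>xs>0. scwr_phi k \<theta> lam xs = xs \<and> (\<forall>y>0. scwr_phi k \<theta> lam y = y \<longrightarrow> y = xs)"
proof -
  let ?\<phi> = "scwr_phi k \<theta> lam"
  have "0 < scwr_ratio \<theta> lam" "scwr_ratio \<theta> lam \<le> 1"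
    using assms by (simp_all add: scwr_ratio_pos scwr_ratio_le_one)
  then have "?\<phi> lam \<le> lam"
    using assms(1) by (simp add: scwr_phi_eq mult_left_le power_le_one)
  moreover have "?\<phi> 0 = lam"
    by (simp add: scwr_phi_def)
  moreover have "continuous_on {0..lam} (\<lambda>x. x - ?\<phi> x)"
    by (intro continuous_intros continuous_on_subset[OF continuous_on_scwr_phi]) auto
  ultimately obtain xs where xs: "0 \<le> xs" "?\<phi> xs = xs"
    using IVT'[of "\<lambda>x. x - ?\<phi> x" 0 0 lam] assms by auto
  have no_two_fixed_points: "\<not> (?\<phi> x = x \<and> ?\<phi> y = y)" if "0 \<le> x" "x < y" for x y
    using scwr_phi_antitone[of lam \<theta> x y k] that assms by linarith
  have "y = xs" if "0 < y" "?\<phi> y = y" for y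
  proof (rule linorder_cases[of y xs])
    assume "y < xs"
    then show ?thesis using no_two_fixed_points[of y xs] that xs by simp
  next
    assume "xs < y"
    then show ?thesis using no_two_fixed_points[of xs y] that xs by simp
  qed
  moreover have "0 < xs"
    using scwr_phi_pos[of lam \<theta> xs k] xs assms by linarith
  ultimately show ?thesis
    using xs(2) by blast
qed

lemma scwr_lambda_of_fixed_point:
  assumes "-1 \<le> \<theta>" "0 \<le> x" "scwr_phi k \<theta> lam x = x"
  shows "scwr_lambda_of k \<theta> x = lam"
proof -
  have "0 < scwr_ratio \<theta> x ^ k"
    using assms by (simp add: scwr_ratio_pos)
  moreover have "x = lam * scwr_ratio \<theta> x ^ k"
    using assms(3) by (simp add: scwr_phi_eq)
  ultimately show ?thesis
    unfolding scwr_lambda_of_eq by (metis less_irrefl nonzero_mult_div_cancel_right)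
qed

lemma scwr_lambda_of_pos: "0 < s \<Longrightarrow> -1 \<le> \<theta> \<Longrightarrow> 0 < scwr_lambda_of k \<theta> s"
  by (simp add: scwr_lambda_of_eq scwr_ratio_pos)

lemma scwr_lambda_of_strict_mono:
  assumes "-1 \<le> \<theta>" "\<theta> \<le> 1" "0 \<le> x" "x < y"
  shows "scwr_lambda_of k \<theta> x < scwr_lambda_of k \<theta> y"
proof -
  have "0 < scwr_ratio \<theta> y"
    using assms by (simp add: scwr_ratio_pos)
  then show ?thesis
    unfolding scwr_lambda_of_eq using assms
    by (intro frac_less power_mono scwr_ratio_antitone) simp_all
qed

lemma scwr_lambda_of_less_iff:
  assumes "-1 \<le> \<theta>" "\<theta> \<le> 1" "0 \<le> x" "0 \<le> y"
  shows "scwr_lambda_of k \<theta> x < scwr_lambda_of k \<theta> y \<longleftrightarrow> x < y"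
  using scwr_lambda_of_strict_mono[OF assms(1,2) assms(3)] scwr_lambda_of_strict_mono[OF assms(1,2) assms(4)]
  by (metis less_asym linorder_neqE_linordered_idom)

lemma scwr_phi_has_real_derivative_at_fixed_point:
  assumes "-1 \<le> \<theta>" "0 \<le> x" "scwr_phi k \<theta> lam x = x"
  shows "(scwr_phi k \<theta> lam has_real_derivative
           - (real k * (1 - \<theta>) * x / ((1 + 2 * x) * (1 + (1 + \<theta>) * x)))) (at x)"
proof -
  let ?r = "scwr_ratio \<theta>" and ?D = "(\<theta> - 1) / (1 + 2 * x)\<^sup>2"
  have "(?r has_real_derivative ?D) (at x)"
    using assms(2) by (intro scwr_ratio_has_real_derivative) simp
  then have "((\<lambda>y. lam * ?r y ^ k) has_real_derivative lam * (real k * ?r x ^ (k - 1) * ?D)) (at x)"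
    by (auto intro!: derivative_eq_intros)
  moreover have "lam * (real k * ?r x ^ (k - 1) * ?D)
      = - (real k * (1 - \<theta>) * x / ((1 + 2 * x) * (1 + (1 + \<theta>) * x)))"
  proof (cases k)
    case (Suc m)
    have "0 < ?r x"
      using assms by (simp add: scwr_ratio_pos)
    moreover have "lam * ?r x ^ m * ?r x = x"
      using assms(3) Suc by (simp add: scwr_phi_eq mult_ac)
    ultimately have "lam * ?r x ^ m = x / ?r x"
      by (simp add: eq_divide_eq)
    also have "\<dots> = x * (1 + 2 * x) / (1 + (1 + \<theta>) * x)"
      by (simp add: scwr_ratio_def)
    finally have fixed: "lam * ?r x ^ m = x * (1 + 2 * x) / (1 + (1 + \<theta>) * x)" .
    have "0 < 1 + (1 + \<theta>) * x"
      using assms by (simp add: add_pos_nonneg)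
    have "lam * (real k * ?r x ^ (k - 1) * ?D) = real k * (lam * ?r x ^ m) * ?D"
      using Suc by simp
    also have "\<dots> = real k * (x * (1 + 2 * x) / (1 + (1 + \<theta>) * x)) * ?D"
      by (simp only: fixed)
    also have "\<dots> = - (real k * (1 - \<theta>) * x / ((1 + 2 * x) * (1 + (1 + \<theta>) * x)))"
      using \<open>0 < 1 + (1 + \<theta>) * x\<close> \<open>0 \<le> x\<close>
      by (simp add: power2_eq_square divide_simps) (simp add: algebra_simps)
    finally show ?thesis .
  qed simp
  ultimately show ?thesis
    by (simp add: scwr_phi_eq[abs_def])
qed

lemma scwr_phi_repelling_fixed_point:
  assumes "-1 \<le> \<theta>" "0 < x" "scwr_phi k \<theta> lam x = x"
    and "(1 + 2 * x) * (1 + (1 + \<theta>) * x) < real k * (1 - \<theta>) * x"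
  shows "\<exists>d. (scwr_phi k \<theta> lam has_real_derivative d) (at x) \<and> d < -1"
proof -
  have "0 < (1 + 2 * x) * (1 + (1 + \<theta>) * x)"
    using assms(1,2) by (simp add: add_pos_nonneg)
  then have "- (real k * (1 - \<theta>) * x / ((1 + 2 * x) * (1 + (1 + \<theta>) * x))) < -1"
    using assms(4) by (simp add: less_divide_eq_1_pos)
  then show ?thesis
    using scwr_phi_has_real_derivative_at_fixed_point[OF assms(1) less_imp_le[OF assms(2)] assms(3)]
    by blast
qed

lemma scwr_fixed_point_between:
  assumes "-1 \<le> \<theta>" "\<theta> \<le> 1" "0 \<le> a" "0 \<le> b" "0 \<le> x" "scwr_phi k \<theta> lam x = x"
    and "scwr_lambda_of k \<theta> a < lam" "lam < scwr_lambda_of k \<theta> b"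
  shows "a < x" "x < b"
proof -
  have "scwr_lambda_of k \<theta> x = lam"
    using scwr_lambda_of_fixed_point[OF assms(1,5,6)] .
  then show "a < x" "x < b"
    using scwr_lambda_of_less_iff[OF assms(1,2,3,5), of k]
      scwr_lambda_of_less_iff[OF assms(1,2,5,4), of k] assms(7,8) by simp_all
qed

lemma scwr_two_periodic_solution_of_two_cycle:
  assumes "0 < a" "0 < b" "scwr_phi k \<theta> lam a = b" "scwr_phi k \<theta> lam b = a"
  shows "scwr_two_periodic_solution k \<theta> lam (a, a) (b, b)"
proof -
  have "1 + x + \<theta> * x = 1 + (1 + \<theta>) * x" "1 + x + x = 1 + 2 * x" for x :: real
    by (simp_all add: algebra_simps)
  then show ?thesis
    unfolding scwr_two_periodic_solution_def Let_def prod.case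
    using assms by (simp only: scwr_phi_def)
qed

theorem mainTheorem18:
  fixes k :: nat and \<theta> lam :: real
  assumes hk: "k \<ge> 6"
    and h\<theta>0: "0 < \<theta>"
    and h\<theta>1: "\<theta> < (real k ^ 2 - 6 * real k + 1) / (real k + 1) ^ 2"
    and hlam: "scwr_lambda_of k \<theta> (scwr_s_minus k \<theta>) < lam"
               "lam < scwr_lambda_of k \<theta> (scwr_s_plus k \<theta>)"
  shows "\<exists>xs x0 x1.
           xs > 0 \<and> scwr_phi k \<theta> lam xs = xs \<and>
           (\<forall>y>0. scwr_phi k \<theta> lam y = y \<longrightarrow> y = xs) \<and>
           x0 > 0 \<and> x1 > 0 \<and> x0 \<noteq> x1 \<and>
           scwr_phi k \<theta> lam x0 = x1 \<and> scwr_phi k \<theta> lam x1 = x0 \<and>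
           scwr_two_periodic_solution k \<theta> lam (xs, xs) (xs, xs) \<and>
           scwr_two_periodic_solution k \<theta> lam (x0, x0) (x1, x1) \<and>
           scwr_two_periodic_solution k \<theta> lam (x1, x1) (x0, x0)"
proof -
  let ?\<phi> = "scwr_phi k \<theta> lam" and ?s_minus = "scwr_s_minus k \<theta>" and ?s_plus = "scwr_s_plus k \<theta>"
  have \<theta>: "-1 \<le> \<theta>" "\<theta> \<le> 1"
    using h\<theta>0 scwr_theta_less_one[OF h\<theta>1] by auto
  have "1 < k"
    using hk by simp
  then have s: "0 < ?s_minus" "0 < ?s_plus"
    using scwr_s_minus_pos[OF _ h\<theta>0 h\<theta>1] scwr_s_minus_less_s_plus[OF h\<theta>0 h\<theta>1] by fastforce+
  have "0 < lam"
    using hlam(1) scwr_lambda_of_pos[OF s(1) \<theta>(1), of k] by linarith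
  then obtain xs where xs: "0 < xs" "?\<phi> xs = xs" and unique: "\<forall>y>0. ?\<phi> y = y \<longrightarrow> y = xs"
    using scwr_phi_unique_fixed_point[OF _ \<theta>] by blast
  have "?s_minus < xs" "xs < ?s_plus"
    using scwr_fixed_point_between[OF \<theta> less_imp_le[OF s(1)] less_imp_le[OF s(2)]
        less_imp_le[OF xs(1)] xs(2) hlam] .
  then have "(1 + 2 * xs) * (1 + (1 + \<theta>) * xs) < real k * (1 - \<theta>) * xs"
    using h\<theta>0 by (intro scwr_repelling_between_s) simp_all
  then obtain d where "(?\<phi> has_real_derivative d) (at xs)" "d < -1"
    using scwr_phi_repelling_fixed_point[OF \<theta>(1) xs] by blast
  then obtain x0 where x0: "0 < x0" "x0 < xs" "?\<phi> (?\<phi> x0) = x0"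
    using two_cycle_below_repelling_fixed_point[OF continuous_on_scwr_phi _ xs]
      scwr_phi_pos[OF \<open>0 < lam\<close> \<theta>(1)] by blast
  define x1 where "x1 = ?\<phi> x0"
  have x1: "0 < x1" "?\<phi> x1 = x0"
    using x0 scwr_phi_pos[OF \<open>0 < lam\<close> \<theta>(1), of x0 k] by (simp_all add: x1_def)
  have "x0 \<noteq> x1"
    using unique x0(1,2) x1(2) by force
  then show ?thesis
    using xs unique x0(1) x1 x1_def[symmetric]
      scwr_two_periodic_solution_of_two_cycle[OF xs(1) xs(1) xs(2) xs(2)]
      scwr_two_periodic_solution_of_two_cycle[OF x0(1) x1(1) x1_def[symmetric] x1(2)]
      scwr_two_periodic_solution_of_two_cycle[OF x1(1) x0(1) x1(2) x1_def[symmetric]]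
    by (intro exI[of _ xs] exI[of _ x0] exI[of _ x1] conjI) assumption+
qed

end
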